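(* For every $\beta\geq 1$, $$\lim_{\eta\to\infty}\ \sup_{t\in\mathbb{R}^+}\ \left|p_{\mathrm{W}_1}(t\mid\beta,\eta)-f_{\mathrm{W}}(t\mid\beta,\eta)\right|=0.$$
   Context: For $\eta>0$, $\beta>0$, $f_{\mathrm{W}}(t\mid\beta,\eta)=\frac{\beta}{\eta}\left(\frac{t}{\eta}\right)^{\beta-1}\exp[-(t/\eta)^\beta]$ for $t>0$ (and $0$ at $t=0$ when $\beta>1$; equal to $1/\eta$ at $t=0$ when $\beta=1$) is the density of the continuous Weibull distribution $\mathrm{W}(\eta,\beta)$. The probability mass function of the Weibull-1 distribution $\mathrm{W}_1(\eta,\beta)$ is $p_{\mathrm{W}_1}(n\mid\beta,\eta)=\exp[-((n-1)/\eta)^\beta]-\exp[-(n/\eta)^\beta]=\int_{n-1}^{n}f_{\mathrm{W}}(s\mid\beta,\eta)\,ds$ for integers $n\geq1$; it is extended to real $t\geq 0$ by setting $p_{\mathrm{W}_1}(t\mid\beta,\eta)=p_{\mathrm{W}_1}(n\mid\beta,\eta)$ for $t\in(n-1,n]$ (and, say, $p_{\mathrm{W}_1}(0\mid\beta,\eta)=p_{\mathrm{W}_1}(1\mid\beta,\eta)$), as done in the paper's argument. *)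

theory Defs
  imports Complex_Main
begin

text \<open>Density of the continuous Weibull distribution W(eta, beta), with the
  paper's convention at t = 0 (value 0 if beta > 1, 1/eta if beta = 1).\<close>
definition weibull_pdf :: "real \<Rightarrow> real \<Rightarrow> real \<Rightarrow> real" where
  "weibull_pdf \<beta> \<eta> t =
     (if t > 0 then (\<beta> / \<eta>) * (t / \<eta>) powr (\<beta> - 1) * exp (- ((t / \<eta>) powr \<beta>))
      else if t = 0 then (if \<beta> = 1 then 1 / \<eta> else 0)
      else 0)"

definition weibull1_pmf_nat :: "real \<Rightarrow> real \<Rightarrow> nat \<Rightarrow> real" where
  "weibull1_pmf_nat \<beta> \<eta> n =
     exp (- (((real n - 1) / \<eta>) powr \<beta>)) - exp (- ((real n / \<eta>) powr \<beta>))"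

definition weibull1_pmf :: "real \<Rightarrow> real \<Rightarrow> real \<Rightarrow> real" where
  "weibull1_pmf \<beta> \<eta> t =
     weibull1_pmf_nat \<beta> \<eta> (if t \<le> 0 then 1 else nat \<lceil>t\<rceil>)"

end

theory Submission
  imports Defs
begin

text \<open>For \<beta> \<ge> 1 and \<eta> \<ge> 1 both the density f_W and the step function p_W1 take values
  in [0, \<beta>/\<eta>], so their distance is at most \<beta>/\<eta> uniformly in t. For f_W this comes from
  u^(\<beta>-1) e^(-u^\<beta>) \<le> 1. For p_W1 on (n-1, n] with n \<ge> 2, the mean value theorem writes
  the increment of the survival function exp (-(t/\<eta>)^\<beta>) as a value of f_W. The first cell
  is bounded directly by 1 - e^(-x) \<le> x.\<close>

lemma tendsto_SUP_abs_zero_by_bound: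
  fixes f :: "'a \<Rightarrow> 'b \<Rightarrow> real"
  assumes "A \<noteq> {}"
    and bound: "\<forall>\<^sub>F x in F. \<forall>t\<in>A. \<bar>f x t\<bar> \<le> g x"
    and "(g \<longlongrightarrow> 0) F"
  shows "((\<lambda>x. SUP t\<in>A. \<bar>f x t\<bar>) \<longlongrightarrow> 0) F"
proof (rule tendsto_sandwich[where f = "\<lambda>_. 0" and h = g])
  obtain t0 where "t0 \<in> A" using \<open>A \<noteq> {}\<close> by blast
  show "\<forall>\<^sub>F x in F. 0 \<le> (SUP t\<in>A. \<bar>f x t\<bar>)"
    using bound
  proof eventually_elim
    case (elim x)
    then have "bdd_above ((\<lambda>t. \<bar>f x t\<bar>) ` A)" by (intro bdd_aboveI2) auto
    then show ?case using \<open>t0 \<in> A\<close> by (intro cSUP_upper2) auto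
  qed
  show "\<forall>\<^sub>F x in F. (SUP t\<in>A. \<bar>f x t\<bar>) \<le> g x"
    using bound by eventually_elim (use \<open>A \<noteq> {}\<close> in \<open>auto intro: cSUP_least\<close>)
qed (use assms in auto)

lemma powr_mult_exp_neg_powr_le_1:
  fixes \<beta> u :: real
  assumes "\<beta> \<ge> 1" "u > 0"
  shows "u powr (\<beta> - 1) * exp (- (u powr \<beta>)) \<le> 1"
proof (cases "u \<le> 1")
  case True
  have "u powr (\<beta> - 1) \<le> 1" using True assms by (intro powr_le1) auto
  then show ?thesis by (simp add: mult_le_one)
next
  case False
  have "u powr (\<beta> - 1) \<le> u powr \<beta>" using False by (intro powr_mono) auto
  moreover have "u powr \<beta> * exp (- (u powr \<beta>)) \<le> 1"
    using exp_ge_add_one_self[of "u powr \<beta>"] by (simp add: exp_minus field_simps del: exp_ge_add_one_self)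
  ultimately show ?thesis by (meson exp_ge_zero mult_right_mono order_trans)
qed

lemma weibull_pdf_nonneg:
  assumes "\<beta> \<ge> 0" "\<eta> > 0"
  shows "0 \<le> weibull_pdf \<beta> \<eta> t"
  using assms by (simp add: weibull_pdf_def)

lemma weibull_pdf_le:
  assumes "\<beta> \<ge> 1" "\<eta> > 0"
  shows "weibull_pdf \<beta> \<eta> t \<le> \<beta> / \<eta>"
proof (cases "t > 0")
  case True
  have "(t / \<eta>) powr (\<beta> - 1) * exp (- ((t / \<eta>) powr \<beta>)) \<le> 1"
    using assms True by (intro powr_mult_exp_neg_powr_le_1) auto
  then have "(\<beta> / \<eta>) * ((t / \<eta>) powr (\<beta> - 1) * exp (- ((t / \<eta>) powr \<beta>))) \<le> \<beta> / \<eta>"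
    using assms by (intro mult_left_le) auto
  then show ?thesis using True by (simp add: weibull_pdf_def mult.assoc)
next
  case False
  then show ?thesis using assms by (auto simp: weibull_pdf_def divide_right_mono)
qed

lemma weibull_survival_has_derivative:
  assumes "\<eta> > 0" "x > 0"
  shows "((\<lambda>s. exp (- ((s / \<eta>) powr \<beta>))) has_real_derivative - weibull_pdf \<beta> \<eta> x) (at x)"
proof -
  have "((\<lambda>s. exp (- ((s / \<eta>) powr \<beta>))) has_real_derivative
          exp (- ((x / \<eta>) powr \<beta>)) * (- (\<beta> * (x / \<eta>) powr (\<beta> - 1) * (1 / \<eta>)))) (at x)"
    using assms by (auto intro!: derivative_eq_intros)
  then show ?thesis using assms by (simp add: weibull_pdf_def mult_ac)
qed

lemma weibull1_pmf_nat_eq_weibull_pdf: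
  assumes "\<eta> > 0" "n \<ge> 2"
  obtains z where "real n - 1 < z" "z < real n" "weibull1_pmf_nat \<beta> \<eta> n = weibull_pdf \<beta> \<eta> z"
proof -
  have "real n - 1 \<ge> 1" using assms by simp
  then obtain z where "real n - 1 < z" "z < real n"
    and "exp (- ((real n / \<eta>) powr \<beta>)) - exp (- (((real n - 1) / \<eta>) powr \<beta>))
           = (real n - (real n - 1)) * - weibull_pdf \<beta> \<eta> z"
    using MVT2[of "real n - 1" "real n" "\<lambda>s. exp (- ((s / \<eta>) powr \<beta>))" "\<lambda>x. - weibull_pdf \<beta> \<eta> x"]
      weibull_survival_has_derivative[OF \<open>\<eta> > 0\<close>] by force
  then show ?thesis using that by (simp add: weibull1_pmf_nat_def)
qed

lemma weibull1_pmf_nat_bounds: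
  assumes "\<beta> \<ge> 1" "\<eta> \<ge> 1" "n \<ge> 1"
  shows "0 \<le> weibull1_pmf_nat \<beta> \<eta> n \<and> weibull1_pmf_nat \<beta> \<eta> n \<le> \<beta> / \<eta>"
proof (cases "n = 1")
  case True
  have "(1 / \<eta>) powr \<beta> \<le> (1 / \<eta>) powr 1"
    using assms by (intro powr_mono') auto
  moreover have "1 - exp (- ((1 / \<eta>) powr \<beta>)) \<le> (1 / \<eta>) powr \<beta>"
    using exp_ge_add_one_self[of "- ((1 / \<eta>) powr \<beta>)"] by linarith
  moreover have "1 / \<eta> \<le> \<beta> / \<eta>" using assms by (simp add: divide_right_mono)
  ultimately show ?thesis using True assms by (simp add: weibull1_pmf_nat_def)
next
  case False
  obtain z where "weibull1_pmf_nat \<beta> \<eta> n = weibull_pdf \<beta> \<eta> z"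
    using weibull1_pmf_nat_eq_weibull_pdf[of \<eta> n \<beta>] False assms by auto
  then show ?thesis using weibull_pdf_nonneg weibull_pdf_le assms by auto
qed

lemma weibull1_pmf_bounds:
  assumes "\<beta> \<ge> 1" "\<eta> \<ge> 1"
  shows "0 \<le> weibull1_pmf \<beta> \<eta> t \<and> weibull1_pmf \<beta> \<eta> t \<le> \<beta> / \<eta>"
proof -
  have "(if t \<le> 0 then 1 else nat \<lceil>t\<rceil>) \<ge> (1::nat)"
    by (cases "t \<le> 0") (auto simp: le_nat_iff)
  then show ?thesis unfolding weibull1_pmf_def using assms by (intro weibull1_pmf_nat_bounds) auto
qed

lemma abs_weibull1_pmf_minus_weibull_pdf_le:
  assumes "\<beta> \<ge> 1" "\<eta> \<ge> 1"
  shows "\<bar>weibull1_pmf \<beta> \<eta> t - weibull_pdf \<beta> \<eta> t\<bar> \<le> \<beta> / \<eta>"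
  using weibull1_pmf_bounds[OF assms, of t] weibull_pdf_nonneg[of \<beta> \<eta> t] weibull_pdf_le[of \<beta> \<eta> t]
    assms by (auto simp: abs_le_iff)

theorem proposition3:
  fixes \<beta> :: real
  assumes "\<beta> \<ge> 1"
  shows "((\<lambda>\<eta>. SUP t\<in>{0..}. \<bar>weibull1_pmf \<beta> \<eta> t - weibull_pdf \<beta> \<eta> t\<bar>)
           \<longlongrightarrow> 0) at_top"
proof (rule tendsto_SUP_abs_zero_by_bound[where g = "\<lambda>\<eta>. \<beta> / \<eta>"])
  show "\<forall>\<^sub>F \<eta> in at_top. \<forall>t\<in>{0..}. \<bar>weibull1_pmf \<beta> \<eta> t - weibull_pdf \<beta> \<eta> t\<bar> \<le> \<beta> / \<eta>"
    using eventually_ge_at_top[of "1::real"]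
    by eventually_elim (use abs_weibull1_pmf_minus_weibull_pdf_le assms in blast)
  show "((\<lambda>\<eta>. \<beta> / \<eta>) \<longlongrightarrow> 0) at_top"
    by (intro tendsto_divide_0[OF tendsto_const] filterlim_at_top_imp_at_infinity filterlim_ident)
qed simp

end
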